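(* Let $m\ge 2$, $\Delta_{m-1}=\{\alpha\in\mathbb{R}^m:\alpha_i\ge 0,\ \sum_i\alpha_i=1\}$, and for each $\alpha\in\Delta_{m-1}$ let $\mathcal{J}_\alpha(x,y)$ be a loss differentiable in the input $x\in\mathbb{R}^d$ with gradient $g_\alpha(x,y)=\nabla_x\mathcal{J}_\alpha(x,y)$; for $i=1,\dots,m$ let $g_i(x,y)\in\mathbb{R}^d$ be the input gradient of the single-tool model $i$. Let $\rho_g=\max\{0,\sup_{i\neq j}\sup_{(x,y)}\cos(g_i(x,y),g_j(x,y))\}$. Assume: (i) (local smoothness) there is $\beta>0$ such that for all $\alpha$, $(x,y)$ and all $\delta\in\mathbb{R}^d$, $\mathcal{J}_\alpha(x+\delta,y)\le\mathcal{J}_\alpha(x,y)+\langle g_\alpha(x,y),\delta\rangle+\frac{\beta}{2}\|\delta\|_2^2$; (ii) (bounded gradients) there is $G>0$ with $\|g_i(x,y)\|_2\le G$ for all $i$, $(x,y)$; (iii) (linear aggregation) $g_\alpha=\sum_i\alpha_ig_i+\xi_\alpha$ with $\|\xi_\alpha(x,y)\|_2\le\delta_g$ for all $\alpha$, $(x,y)$; and assume the tool gradients are not perfectly aligned, $\rho_g<1$. Let $\varepsilon>0$ and define the robustness radius $R_\varepsilon(x,y;\alpha)=\sup\{z\ge 0:\forall\delta,\ \|\delta\|_2\le z\Rightarrow \mathcal{J}_\alpha(x+\delta,y)\le\mathcal{J}_\alpha(x,y)+\varepsilon\}$. Let $B(\alpha)=G\sqrt{\rho_g+(1-\rho_g)\|\alpha\|_2^2}+\delta_g$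 (an upper bound on $\|g_\alpha(x,y)\|_2$) and $r(\alpha)=\big(\sqrt{B(\alpha)^2+2\beta\varepsilon}-B(\alpha)\big)/\beta$. Then: $B(\alpha)$ is strictly increasing in $\|\alpha\|_2^2$, so a softer composition (smaller $\|\alpha\|_2^2$) strictly decreases the upper bound on $\|g_\alpha(x,y)\|_2$; and $r(\alpha)$ is a lower bound on $R_\varepsilon(x,y;\alpha)$ for all $(x,y)$, with $r(\alpha)>r(e_j)$ for every non-one-hot $\alpha\in\Delta_{m-1}$ (i.e. $\|\alpha\|_2^2<1$) and every hard selection $e_j$ (a standard basis vector, $\|e_j\|_2^2=1$).
   Context: Setting: a base LLM with parameters $\theta$ and $m$ tools, tool $i$ represented by a parameter increment $\Delta\theta_i$; $\mathcal{J}_\alpha$ is the loss of the model with parameters $\theta+\sum_i\alpha_i\Delta\theta_i$ on input context $x$ and target action $y$, and $g_i$ the input gradient of the loss with parameters $\theta+\Delta\theta_i$. A "hard selection" is a one-hot weight vector; a "soft composition" is any other weight vector in the simplex. *)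

theory Defs
  imports "HOL-Analysis.Analysis"
begin

definition prob_simplex :: "(real ^ 'm::finite) set" where
  "prob_simplex = {\<alpha>. (\<forall>i. 0 \<le> \<alpha> $ i) \<and> (\<Sum>i\<in>UNIV. \<alpha> $ i) = 1}"

text \<open>Cosine similarity (with HOL's convention x / 0 = 0 for zero vectors).\<close>
definition vcos :: "'x::real_inner \<Rightarrow> 'x \<Rightarrow> real" where
  "vcos u v = (u \<bullet> v) / (norm u * norm v)"

definition rho_g :: "('m \<Rightarrow> 'x::real_inner \<Rightarrow> 'y \<Rightarrow> 'x) \<Rightarrow> real" where
  "rho_g g = max 0 (Sup {vcos (g i x y) (g j x y) | i j x y. i \<noteq> j})"

text \<open>Robustness radius, valued in the extended reals (it may be infinite).\<close>
definition robust_radius :: "('x::real_normed_vector \<Rightarrow> 'y \<Rightarrow> real) \<Rightarrow> real \<Rightarrow> 'x \<Rightarrow> 'y \<Rightarrow> ereal" where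
  "robust_radius Jal \<epsilon> x y =
     Sup (ereal ` {z. 0 \<le> z \<and> (\<forall>\<delta>. norm \<delta> \<le> z \<longrightarrow> Jal (x + \<delta>) y \<le> Jal x y + \<epsilon>)})"

definition Bbound :: "real \<Rightarrow> real \<Rightarrow> real \<Rightarrow> real ^ 'm::finite \<Rightarrow> real" where
  "Bbound G \<rho> \<delta>g \<alpha> = G * sqrt (\<rho> + (1 - \<rho>) * (norm \<alpha>)\<^sup>2) + \<delta>g"

definition rbound :: "real \<Rightarrow> real \<Rightarrow> real \<Rightarrow> real \<Rightarrow> real \<Rightarrow> real ^ 'm::finite \<Rightarrow> real" where
  "rbound G \<rho> \<delta>g \<beta> \<epsilon> \<alpha> =
     (sqrt ((Bbound G \<rho> \<delta>g \<alpha>)\<^sup>2 + 2 * \<beta> * \<epsilon>) - Bbound G \<rho> \<delta>g \<alpha>) / \<beta>"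

end

theory Submission
  imports Defs
begin

text \<open>Expanding the square of the aggregated gradient, the diagonal terms contribute at most
  \<open>G\<^sup>2 \<parallel>\<alpha>\<parallel>\<^sup>2\<close> and the off-diagonal ones at most \<open>\<rho> G\<^sup>2 (1 - \<parallel>\<alpha>\<parallel>\<^sup>2)\<close>, which gives the
  bound \<open>B(\<alpha>)\<close>; it grows with \<open>\<parallel>\<alpha>\<parallel>\<^sup>2\<close> because \<open>\<rho> < 1\<close>. By smoothness and Cauchy-Schwarz,
  \<open>J\<^sub>\<alpha>(x + \<delta>) - J\<^sub>\<alpha>(x) \<le> B \<parallel>\<delta>\<parallel> + \<beta>/2 \<parallel>\<delta>\<parallel>\<^sup>2\<close>, which stays below \<open>\<epsilon>\<close> as long as \<open>\<parallel>\<delta>\<parallel>\<close> is at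
  most the positive root \<open>r\<close> of \<open>\<beta>/2 r\<^sup>2 + B r = \<epsilon>\<close>. This root strictly decreases in \<open>B\<close>, and
  \<open>\<parallel>\<alpha>\<parallel>\<^sup>2 < 1 = \<parallel>e\<^sub>j\<parallel>\<^sup>2\<close> off the vertices of the simplex.\<close>

lemma norm_vec_power2: "(norm (a::real^'n))\<^sup>2 = (\<Sum>i\<in>UNIV. (a$i)\<^sup>2)"
  unfolding power2_norm_eq_inner by (simp add: inner_vec_def power2_eq_square)

lemma norm_nonneg_combination_power2_le:
  fixes v :: "'n::finite \<Rightarrow> 'x::real_inner" and a :: "real^'n"
  assumes a_nonneg: "\<And>i. 0 \<le> a$i"
    and norm_le: "\<And>i. norm (v i) \<le> G"
    and inner_le: "\<And>i j. i \<noteq> j \<Longrightarrow> v i \<bullet> v j \<le> \<rho> * (norm (v i) * norm (v j))"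
    and \<rho>_nonneg: "0 \<le> \<rho>"
  shows "(norm (\<Sum>i\<in>UNIV. a$i *\<^sub>R v i))\<^sup>2
           \<le> G\<^sup>2 * (\<rho> * (\<Sum>i\<in>UNIV. a$i)\<^sup>2 + (1 - \<rho>) * (norm a)\<^sup>2)"
proof -
  have inner_le_bound: "v i \<bullet> v j \<le> (if i = j then G\<^sup>2 else \<rho> * G\<^sup>2)" for i j
  proof -
    have "norm (v i) * norm (v j) \<le> G\<^sup>2"
      using norm_le by (metis mult_mono' norm_ge_zero power2_eq_square)
    then show ?thesis
      using inner_le[of i j] \<rho>_nonneg norm_cauchy_schwarz[of "v i" "v j"]
      by (auto intro: order_trans mult_left_mono)
  qed
  have "(norm (\<Sum>i\<in>UNIV. a$i *\<^sub>R v i))\<^sup>2 = (\<Sum>i\<in>UNIV. \<Sum>j\<in>UNIV. a$i * a$j * (v i \<bullet> v j))"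
    by (simp add: power2_norm_eq_inner inner_sum_left inner_sum_right sum_distrib_left
        mult.assoc mult.left_commute inner_commute)
  also have "\<dots> \<le> (\<Sum>i\<in>UNIV. \<Sum>j\<in>UNIV. a$i * a$j * (if i = j then G\<^sup>2 else \<rho> * G\<^sup>2))"
    by (intro sum_mono mult_left_mono inner_le_bound) (simp add: a_nonneg)
  also have "\<dots> = (\<Sum>i\<in>UNIV. \<Sum>j\<in>UNIV. \<rho> * G\<^sup>2 * (a$i * a$j)
                    + (if i = j then (1 - \<rho>) * G\<^sup>2 * (a$i)\<^sup>2 else 0))"
    by (intro sum.cong refl) (auto simp: algebra_simps power2_eq_square)
  also have "\<dots> = \<rho> * G\<^sup>2 * (\<Sum>i\<in>UNIV. \<Sum>j\<in>UNIV. a$i * a$j) + (1 - \<rho>) * G\<^sup>2 * (norm a)\<^sup>2"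
    by (simp add: sum.distrib sum_distrib_left norm_vec_power2)
  also have "\<dots> = G\<^sup>2 * (\<rho> * (\<Sum>i\<in>UNIV. a$i)\<^sup>2 + (1 - \<rho>) * (norm a)\<^sup>2)"
    by (simp add: power2_eq_square sum_product algebra_simps)
  finally show ?thesis .
qed

lemma vcos_le_1: "vcos u v \<le> 1"
  by (cases "norm u * norm v = 0")
     (auto simp: vcos_def norm_cauchy_schwarz zero_less_mult_iff)

lemma rho_g_nonneg: "0 \<le> rho_g g"
  by (simp add: rho_g_def)

lemma inner_le_rho_g:
  assumes "i \<noteq> j"
  shows "g i x y \<bullet> g j x y \<le> rho_g g * (norm (g i x y) * norm (g j x y))"
proof (cases "g i x y = 0 \<or> g j x y = 0")
  case True
  then show ?thesis by auto
next
  case False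
  then have norms_pos: "0 < norm (g i x y) * norm (g j x y)" by simp
  let ?S = "{vcos (g i x y) (g j x y) | i j x y. i \<noteq> j}"
  have "vcos (g i x y) (g j x y) \<le> Sup ?S"
    using assms vcos_le_1 by (intro cSup_upper bdd_aboveI[where M = 1]) blast+
  also have "\<dots> \<le> rho_g g" by (simp add: rho_g_def)
  finally show ?thesis
    using norms_pos by (simp add: vcos_def divide_le_eq)
qed

lemma norm_le_Bbound:
  fixes g :: "'m::finite \<Rightarrow> 'x::real_inner \<Rightarrow> 'y \<Rightarrow> 'x"
  assumes \<alpha>: "\<alpha> \<in> prob_simplex"
    and norm_le: "\<And>i. norm (g i x y) \<le> G"
    and aggregation: "norm (v - (\<Sum>i\<in>UNIV. \<alpha>$i *\<^sub>R g i x y)) \<le> \<delta>g"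
  shows "norm v \<le> Bbound G (rho_g g) \<delta>g \<alpha>"
proof -
  let ?\<rho> = "rho_g g" and ?w = "\<Sum>i\<in>UNIV. \<alpha>$i *\<^sub>R g i x y"
  have G_nonneg: "0 \<le> G" using norm_le by (meson norm_ge_zero order_trans)
  have "(norm ?w)\<^sup>2 \<le> G\<^sup>2 * (?\<rho> + (1 - ?\<rho>) * (norm \<alpha>)\<^sup>2)"
    using norm_nonneg_combination_power2_le[of \<alpha> "\<lambda>i. g i x y" G ?\<rho>,
        OF _ norm_le inner_le_rho_g rho_g_nonneg] \<alpha>
    by (simp add: prob_simplex_def)
  then have "norm ?w \<le> sqrt (G\<^sup>2 * (?\<rho> + (1 - ?\<rho>) * (norm \<alpha>)\<^sup>2))"
    using real_le_rsqrt by blast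
  also have "\<dots> = G * sqrt (?\<rho> + (1 - ?\<rho>) * (norm \<alpha>)\<^sup>2)"
    using G_nonneg by (simp add: real_sqrt_mult)
  finally show ?thesis
    using aggregation norm_triangle_sub[of v ?w] by (simp add: Bbound_def)
qed

lemma Bbound_strict_mono:
  assumes "0 < G" "\<rho> < 1" "(norm \<alpha>)\<^sup>2 < (norm \<alpha>')\<^sup>2"
  shows "Bbound G \<rho> \<delta>g \<alpha> < Bbound G \<rho> \<delta>g \<alpha>'"
  using assms by (simp add: Bbound_def)

lemma sqrt_square_add_minus_strict_antimono:
  fixes B\<^sub>1 B\<^sub>2 c :: real
  assumes "B\<^sub>1 < B\<^sub>2" "0 < c"
  shows "sqrt (B\<^sub>2\<^sup>2 + c) - B\<^sub>2 < sqrt (B\<^sub>1\<^sup>2 + c) - B\<^sub>1"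
proof -
  define s\<^sub>1 s\<^sub>2 where "s\<^sub>1 = sqrt (B\<^sub>1\<^sup>2 + c)" and "s\<^sub>2 = sqrt (B\<^sub>2\<^sup>2 + c)"
  have s_gt: "B < sqrt (B\<^sup>2 + c)" for B
    using assms(2) real_sqrt_less_mono[of "B\<^sup>2" "B\<^sup>2 + c"] by (simp del: real_sqrt_less_mono)
  have s_sum_pos: "0 < s\<^sub>1 + s\<^sub>2"
    using assms(2) by (simp add: s\<^sub>1_def s\<^sub>2_def add_pos_pos add_nonneg_pos)
  have "(s\<^sub>2 - s\<^sub>1) * (s\<^sub>1 + s\<^sub>2) = (B\<^sub>2 - B\<^sub>1) * (B\<^sub>1 + B\<^sub>2)"
    using assms(2) by (simp add: s\<^sub>1_def s\<^sub>2_def algebra_simps power2_eq_square[symmetric])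
  also have "\<dots> < (B\<^sub>2 - B\<^sub>1) * (s\<^sub>1 + s\<^sub>2)"
    using assms(1) s_gt[of B\<^sub>1] s_gt[of B\<^sub>2] by (simp add: s\<^sub>1_def s\<^sub>2_def)
  finally have "s\<^sub>2 - s\<^sub>1 < B\<^sub>2 - B\<^sub>1"
    using s_sum_pos by (simp only: mult_less_cancel_right_pos)
  then show ?thesis by (simp add: s\<^sub>1_def s\<^sub>2_def)
qed

lemma rbound_strict_antimono:
  assumes "0 < G" "\<rho> < 1" "0 < \<beta>" "0 < \<epsilon>" "(norm \<alpha>)\<^sup>2 < (norm \<alpha>')\<^sup>2"
  shows "rbound G \<rho> \<delta>g \<beta> \<epsilon> \<alpha>' < rbound G \<rho> \<delta>g \<beta> \<epsilon> \<alpha>"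
  using sqrt_square_add_minus_strict_antimono[OF Bbound_strict_mono[OF assms(1,2,5)],
      of "2 * \<beta> * \<epsilon>" \<delta>g] assms(3,4)
  by (simp add: rbound_def divide_strict_right_mono)

lemma positive_root_quadratic:
  fixes B \<beta> \<epsilon> :: real
  assumes "0 < \<beta>" "0 \<le> B\<^sup>2 + 2 * \<beta> * \<epsilon>"
  defines "r \<equiv> (sqrt (B\<^sup>2 + 2 * \<beta> * \<epsilon>) - B) / \<beta>"
  shows "B * r + \<beta> / 2 * r\<^sup>2 = \<epsilon>"
proof -
  let ?s = "sqrt (B\<^sup>2 + 2 * \<beta> * \<epsilon>)"
  have "\<beta> * (B * r + \<beta> / 2 * r\<^sup>2) = B * (?s - B) + (?s - B)\<^sup>2 / 2"
    using assms(1) by (simp add: r_def power2_eq_square field_simps)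
  also have "\<dots> = (?s\<^sup>2 - B\<^sup>2) / 2" by (simp add: power2_eq_square field_simps)
  also have "\<dots> = \<beta> * \<epsilon>" using assms(2) by simp
  finally show ?thesis using assms(1) by simp
qed

lemma robust_radius_ge_root:
  fixes F :: "'x::real_inner \<Rightarrow> 'y \<Rightarrow> real"
  assumes smooth: "\<And>\<delta>. F (x + \<delta>) y \<le> F x y + v \<bullet> \<delta> + \<beta> / 2 * (norm \<delta>)\<^sup>2"
    and norm_v: "norm v \<le> B" and \<beta>: "0 < \<beta>" and \<epsilon>: "0 \<le> \<epsilon>"
  shows "ereal ((sqrt (B\<^sup>2 + 2 * \<beta> * \<epsilon>) - B) / \<beta>) \<le> robust_radius F \<epsilon> x y"
proof -
  define r where "r = (sqrt (B\<^sup>2 + 2 * \<beta> * \<epsilon>) - B) / \<beta>"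
  have B_nonneg: "0 \<le> B" using norm_v norm_ge_zero order_trans by blast
  have "B \<le> sqrt (B\<^sup>2 + 2 * \<beta> * \<epsilon>)"
    using \<beta> \<epsilon> by (simp add: real_le_rsqrt)
  then have r_nonneg: "0 \<le> r" using \<beta> by (simp add: r_def)
  have root: "B * r + \<beta> / 2 * r\<^sup>2 = \<epsilon>"
    unfolding r_def using \<beta> \<epsilon> by (intro positive_root_quadratic) auto
  have "F (x + \<delta>) y \<le> F x y + \<epsilon>" if "norm \<delta> \<le> r" for \<delta>
  proof -
    have "v \<bullet> \<delta> \<le> B * r"
      using norm_cauchy_schwarz[of v \<delta>] norm_v that B_nonneg
      by (meson mult_mono' norm_ge_zero order_trans)
    moreover have "\<beta> / 2 * (norm \<delta>)\<^sup>2 \<le> \<beta> / 2 * r\<^sup>2"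
      using that \<beta> by (simp add: power_mono)
    ultimately show ?thesis using smooth[of \<delta>] root by linarith
  qed
  then have "ereal r \<le> robust_radius F \<epsilon> x y"
    unfolding robust_radius_def using r_nonneg by (intro Sup_upper imageI) auto
  then show ?thesis by (simp add: r_def)
qed

theorem corollary3p7:
  fixes J :: "real ^ 'm::finite \<Rightarrow> 'x::euclidean_space \<Rightarrow> 'y \<Rightarrow> real"
    and ga :: "real ^ 'm \<Rightarrow> 'x \<Rightarrow> 'y \<Rightarrow> 'x"
    and g :: "'m \<Rightarrow> 'x \<Rightarrow> 'y \<Rightarrow> 'x"
    and \<beta> G \<delta>g \<epsilon> :: real
  assumes m2: "CARD('m) \<ge> 2"
    and grad: "\<And>\<alpha> x y. \<alpha> \<in> prob_simplex \<Longrightarrow>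
                 ((\<lambda>x'. J \<alpha> x' y) has_derivative (\<lambda>h. ga \<alpha> x y \<bullet> h)) (at x)"
    and beta_pos: "\<beta> > 0"
    and smooth: "\<And>\<alpha> x y \<delta>. \<alpha> \<in> prob_simplex \<Longrightarrow>
                 J \<alpha> (x + \<delta>) y \<le> J \<alpha> x y + ga \<alpha> x y \<bullet> \<delta> + \<beta> / 2 * (norm \<delta>)\<^sup>2"
    and G_pos: "G > 0"
    and bounded: "\<And>i x y. norm (g i x y) \<le> G"
    and linagg: "\<And>\<alpha> x y. \<alpha> \<in> prob_simplex \<Longrightarrow>
                 norm (ga \<alpha> x y - (\<Sum>i\<in>UNIV. (\<alpha> $ i) *\<^sub>R g i x y)) \<le> \<delta>g"
    and rho_lt: "rho_g g < 1"
    and eps_pos: "\<epsilon> > 0"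
  shows "(\<forall>\<alpha>\<in>prob_simplex. \<forall>x y. norm (ga \<alpha> x y) \<le> Bbound G (rho_g g) \<delta>g \<alpha>)
       \<and> (\<forall>\<alpha>\<in>(prob_simplex :: (real^'m) set). \<forall>\<alpha>'\<in>(prob_simplex :: (real^'m) set). (norm \<alpha>)\<^sup>2 < (norm \<alpha>')\<^sup>2 \<longrightarrow>
             Bbound G (rho_g g) \<delta>g \<alpha> < Bbound G (rho_g g) \<delta>g \<alpha>')
       \<and> (\<forall>\<alpha>\<in>prob_simplex. \<forall>x y.
             ereal (rbound G (rho_g g) \<delta>g \<beta> \<epsilon> \<alpha>) \<le> robust_radius (J \<alpha>) \<epsilon> x y)
       \<and> (\<forall>\<alpha>\<in>(prob_simplex :: (real^'m) set). (norm \<alpha>)\<^sup>2 < 1 \<longrightarrow> (\<forall>j::'m.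
             rbound G (rho_g g) \<delta>g \<beta> \<epsilon> \<alpha> > rbound G (rho_g g) \<delta>g \<beta> \<epsilon> (axis j 1)))"
proof -
  have grad_bound: "norm (ga \<alpha> x y) \<le> Bbound G (rho_g g) \<delta>g \<alpha>" if "\<alpha> \<in> prob_simplex" for \<alpha> x y
    using norm_le_Bbound[OF that bounded linagg[OF that]] .
  have radius: "ereal (rbound G (rho_g g) \<delta>g \<beta> \<epsilon> \<alpha>) \<le> robust_radius (J \<alpha>) \<epsilon> x y"
    if "\<alpha> \<in> prob_simplex" for \<alpha> x y
    using robust_radius_ge_root[where F = "J \<alpha>" and x = x and y = y, OF smooth[OF that] grad_bound[OF that] beta_pos] eps_pos
    by (simp add: rbound_def)
  have vertex: "rbound G (rho_g g) \<delta>g \<beta> \<epsilon> (axis j 1) < rbound G (rho_g g) \<delta>g \<beta> \<epsilon> \<alpha>"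
    if "(norm \<alpha>)\<^sup>2 < 1" for \<alpha> :: "real^'m" and j
    using rbound_strict_antimono[OF G_pos rho_lt beta_pos eps_pos, where \<alpha>' = "axis j 1"] that
    by (simp add: norm_axis_1)
  show ?thesis
    using grad_bound Bbound_strict_mono[OF G_pos rho_lt] radius vertex by blast
qed

end
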